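(* Let $A$ be a linear Nakayama algebra with simple modules $S_0,\dots,S_{n-1}$, Kupisch series $[c_0,\dots,c_{n-1}]$ and Jacobson radical $J$, and let $d_j=\dim_K D(Ae_j)$. Let $0\le s\le n-2$ and $1\le t\le c_s-1$. Then the module $e_sJ^t$ has injective dimension at most one if and only if $d_{s+c_s-1}-c_s+t=d_{s+t-1}$, and in this case its injective dimension equals one. In particular, $e_sJ$ has injective dimension at most one if and only if $d_{s+c_s-1}-c_s+1=d_s$.
   Context: $K$ is a field; a linear Nakayama algebra with $n$ simple modules is a connected algebra $A=KQ/I$ with $Q$ the quiver $0\to1\to\cdots\to n-1$ and $I$ admissible; modules are finite-dimensional right modules. $e_iA$ is uniserial with composition factors $S_i,\dots,S_{i+c_i-1}$ from top to socle, $c_i=\dim_K e_iA$. $D=\operatorname{Hom}_K(-,K)$ and $D(Ae_j)$ is the injective envelope of $S_j$. *)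

theory Defs
  imports "Jordan_Normal_Form.Matrix"
begin

text \<open>
  Linear Nakayama algebra A = KQ/I, Q = 0 -> 1 -> ... -> n-1, given by its Kupisch series
  c_0,...,c_{n-1} (c_i = dim e_i A).  Every admissible ideal of KQ for this quiver is generated
  by the paths of length c_i starting at i, so A is determined by (n, c).
  Finite-dimensional right A-modules are represented as quiver representations:
  a K-space K^(rdim M j) at each vertex j < n and a matrix rmap M j : K^(rdim M j) -> K^(rdim M (j+1))
  for the arrow j -> j+1, subject to the relations of I.
\<close>

definition kupisch_linear :: "nat \<Rightarrow> (nat \<Rightarrow> nat) \<Rightarrow> bool" where
  "kupisch_linear n c \<longleftrightarrow> n \<ge> 1 \<and> c (n - 1) = 1 \<and>
     (\<forall>i. i + 1 < n \<longrightarrow> c i \<ge> 2 \<and> c i \<le> c (i + 1) + 1)"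

record 'k rep =
  rdim :: "nat \<Rightarrow> nat"
  rmap :: "nat \<Rightarrow> 'k mat"

fun pathmat :: "'k::field rep \<Rightarrow> nat \<Rightarrow> nat \<Rightarrow> 'k mat" where
  "pathmat M i 0 = 1\<^sub>m (rdim M i)"
| "pathmat M i (Suc l) = rmap M (i + l) * pathmat M i l"

definition valid_rep :: "nat \<Rightarrow> (nat \<Rightarrow> nat) \<Rightarrow> 'k::field rep \<Rightarrow> bool" where
  "valid_rep n c M \<longleftrightarrow>
     (\<forall>j. j \<ge> n \<longrightarrow> rdim M j = 0) \<and>
     (\<forall>j. j + 1 < n \<longrightarrow> rmap M j \<in> carrier_mat (rdim M (j + 1)) (rdim M j)) \<and>
     (\<forall>i. i < n \<longrightarrow> i + c i < n \<longrightarrow> pathmat M i (c i) = 0\<^sub>m (rdim M (i + c i)) (rdim M i))"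

definition is_hom :: "nat \<Rightarrow> 'k::field rep \<Rightarrow> 'k rep \<Rightarrow> (nat \<Rightarrow> 'k mat) \<Rightarrow> bool" where
  "is_hom n M N f \<longleftrightarrow>
     (\<forall>j < n. f j \<in> carrier_mat (rdim N j) (rdim M j)) \<and>
     (\<forall>j. j + 1 < n \<longrightarrow> rmap N j * f j = f (j + 1) * rmap M j)"

definition is_mono :: "nat \<Rightarrow> 'k::field rep \<Rightarrow> (nat \<Rightarrow> 'k mat) \<Rightarrow> bool" where
  "is_mono n M f \<longleftrightarrow>
     (\<forall>j < n. \<forall>v \<in> carrier_vec (rdim M j). f j *\<^sub>v v = 0\<^sub>v (dim_row (f j)) \<longrightarrow> v = 0\<^sub>v (rdim M j))"

definition injective_module :: "nat \<Rightarrow> (nat \<Rightarrow> nat) \<Rightarrow> 'k::field rep \<Rightarrow> bool" where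
  "injective_module n c E \<longleftrightarrow> valid_rep n c E \<and>
     (\<forall>X Y f g. valid_rep n c X \<longrightarrow> valid_rep n c Y \<longrightarrow> is_hom n X Y f \<longrightarrow> is_mono n X f \<longrightarrow>
        is_hom n X E g \<longrightarrow> (\<exists>h. is_hom n Y E h \<and> (\<forall>j < n. h j * f j = g j)))"

text \<open>M has injective dimension at most m: there is an exact sequence
  0 -> M -> I_0 -> I_1 -> ... -> I_m -> 0 with all I_k injective.\<close>
definition injdim_le :: "nat \<Rightarrow> (nat \<Rightarrow> nat) \<Rightarrow> 'k::field rep \<Rightarrow> nat \<Rightarrow> bool" where
  "injdim_le n c M m \<longleftrightarrow>
     (\<exists>(I :: nat \<Rightarrow> 'k rep) \<epsilon> \<delta>.
        (\<forall>k \<le> m. injective_module n c (I k)) \<and>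
        is_hom n M (I 0) \<epsilon> \<and> is_mono n M \<epsilon> \<and>
        (\<forall>k < m. is_hom n (I k) (I (k + 1)) (\<delta> k)) \<and>
        (\<forall>k \<le> m. \<forall>j < n. \<forall>v \<in> carrier_vec (rdim (I k) j).
           ((k < m \<longrightarrow> \<delta> k j *\<^sub>v v = 0\<^sub>v (rdim (I (k + 1)) j)) \<longleftrightarrow>
            (if k = 0 then (\<exists>w \<in> carrier_vec (rdim M j). v = \<epsilon> j *\<^sub>v w)
             else (\<exists>w \<in> carrier_vec (rdim (I (k - 1)) j). v = \<delta> (k - 1) j *\<^sub>v w)))))"

text \<open>d_j = dim_K D(A e_j) = dim_K A e_j = number of nonzero paths of A ending at vertex j
  (the path i -> j, i \<le> j, is nonzero in A iff j - i < c_i).\<close>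
definition dual_dim :: "(nat \<Rightarrow> nat) \<Rightarrow> nat \<Rightarrow> nat" where
  "dual_dim c j = card {i. i \<le> j \<and> j < i + c i}"

text \<open>The module e_s J^t: e_s A is uniserial with basis the paths from s of length 0,...,c_s-1,
  and J^t is spanned by paths of length \<ge> t; so e_s J^t has K at vertices s+t,...,s+c_s-1 and
  identity maps between consecutive such vertices.\<close>
definition interval_rep :: "nat \<Rightarrow> nat \<Rightarrow> 'k::field rep" where
  "interval_rep a b = \<lparr> rdim = (\<lambda>j. if a \<le> j \<and> j \<le> b then 1 else 0),
      rmap = (\<lambda>j. if a \<le> j \<and> j + 1 \<le> b then 1\<^sub>m 1
                  else 0\<^sub>m (if a \<le> j + 1 \<and> j + 1 \<le> b then 1 else 0) (if a \<le> j \<and> j \<le> b then 1 else 0)) \<rparr>"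

definition eJpow :: "(nat \<Rightarrow> nat) \<Rightarrow> nat \<Rightarrow> nat \<Rightarrow> 'k::field rep" where
  "eJpow c s t = interval_rep (s + t) (s + c s - 1)"

end

(*
  Modules over the linear Nakayama algebra are representations of the linear quiver, and
  e_s J^t is the interval module [a, b] with a = s + t and b = s + c_s - 1.  Writing L j for the
  least i with j < i + c_i, the injective module D(A e_j) is the interval module [L j, j], so
  d_j = j + 1 - L j and the condition on the d_j says exactly L (a - 1) = L b.

  The injective envelope of [a, b] is [L b, b] with L b <= s < a, so [a, b] is not injective.
  If L (a - 1) = L b, then 0 -> [a, b] -> [L b, b] -> [L b, a - 1] -> 0 is an injective
  coresolution.  Conversely, given a coresolution 0 -> [a, b] -> I0 -> I1 -> 0, extend the
  embedding to the envelope, [L b, b] -> I0, and compose with I0 -> I1.  The composite kills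
  [a, b], so it induces [L b, a - 1] -> I1, which extends to [L (a - 1), a - 1] because I1 is
  injective.  Lifting along the surjection I0 -> I1, which is injective at L b < a, shows that
  the image in I0 of the top of the envelope is reached by a path from vertex L (a - 1).  If
  L (a - 1) < L b, continue this path to the vertex L (a - 1) + c_(L (a - 1)), which lies in
  [a, b]: the result is a path of length c_(L (a - 1)), hence zero in A, so the embedding of
  [a, b] would vanish at that vertex.
*)
theory Submission
  imports Defs "Jordan_Normal_Form.Gauss_Jordan_Elimination"
begin

section \<open>Matrices\<close>

lemma left_inverse_of_pivot_fun:
  fixes C :: "'k::field mat"
  assumes C: "C \<in> carrier_mat nr nc" and piv: "pivot_fun C p nc"
    and pivot_row: "\<And>j. j < nc \<Longrightarrow> \<exists>i<nr. p i = j"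
  shows "mat nc nr (\<lambda>(j, i). if p i = j then 1 else 0) * C = 1\<^sub>m nc"
    (is "?G * C = _")
proof -
  note pD = pivot_funD[OF carrier_matD(1)[OF C] piv]
  have pivot_inj: "i = i'" if "i < nr" "i' < nr" "p i = p i'" "p i < nc" for i i'
  proof (rule ccontr)
    assume "i \<noteq> i'"
    then have "C $$ (i', p i) = 0" using pD(5)[of i i'] that by auto
    moreover have "C $$ (i', p i') = 1" using pD(4)[of i'] that by auto
    ultimately show False using that by auto
  qed
  show ?thesis
  proof (rule eq_matI)
    fix j j' assume "j < dim_row (1\<^sub>m nc :: 'k mat)" "j' < dim_col (1\<^sub>m nc :: 'k mat)"
    then have j: "j < nc" "j' < nc" by auto
    obtain i0 where i0: "i0 < nr" "p i0 = j" using pivot_row[OF j(1)] by auto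
    have "(?G * C) $$ (j, j') = (\<Sum>i\<in>{0..<nr}. (if p i = j then 1 else 0) * C $$ (i, j'))"
      using j C by (simp add: scalar_prod_def)
    also have "\<dots> = (\<Sum>i\<in>{0..<nr}. (if i = i0 then C $$ (i0, j') else 0))"
      by (rule sum.cong) (use pivot_inj i0 j in auto)
    also have "\<dots> = C $$ (i0, j')" using i0 by simp
    also have "\<dots> = 1\<^sub>m nc $$ (j, j')"
    proof (cases "j' = j")
      case True then show ?thesis using pD(4)[of i0] i0 j by auto
    next
      case False
      obtain i1 where i1: "i1 < nr" "p i1 = j'" using pivot_row[OF j(2)] by auto
      have "C $$ (i0, p i1) = 0" using False pD(5)[of i1 i0] i0 i1 j by auto
      then show ?thesis using False i1 j by auto
    qed
    finally show "(?G * C) $$ (j, j') = 1\<^sub>m nc $$ (j, j')" .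
  qed (use C in auto)
qed

lemma left_inverse_of_injective_mat:
  fixes A :: "'k::field mat"
  assumes A: "A \<in> carrier_mat nr nc"
    and inj: "\<forall>v \<in> carrier_vec nc. A *\<^sub>v v = 0\<^sub>v nr \<longrightarrow> v = 0\<^sub>v nc"
  shows "\<exists>G \<in> carrier_mat nc nr. G * A = 1\<^sub>m nc"
proof -
  obtain C where C: "gauss_jordan_single A = C" by simp
  note gj = gauss_jordan_single[OF A C]
  have Cc: "C \<in> carrier_mat nr nc" and ref: "row_echelon_form C" using gj by auto
  obtain P where PC: "C = P * A" and P: "P \<in> carrier_mat nr nr" using gj(4) by blast
  obtain p where piv: "pivot_fun C p nc" using ref Cc unfolding row_echelon_form_def by auto
  define G0 :: "'k mat" where "G0 = mat nc nr (\<lambda>(j, i). if p i = j then 1 else 0)"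
  \<comment> \<open>A column without pivot would give a nonzero vector in the kernel of C = P * A.\<close>
  have injC: "\<And>v. v \<in> carrier_vec nc \<Longrightarrow> C *\<^sub>v v = 0\<^sub>v nr \<Longrightarrow> v = 0\<^sub>v nc"
    using gj(1) inj by blast
  have all_pivots: "snd ` set (pivot_positions C) = {0..<nc}"
  proof (rule ccontr)
    assume "snd ` set (pivot_positions C) \<noteq> {0..<nc}"
    then show False using find_base_vector[OF ref Cc] injC by blast
  qed
  have "\<exists>i<nr. p i = j" if "j < nc" for j
  proof -
    have "j \<in> snd ` set (pivot_positions C)" using all_pivots that by auto
    then show ?thesis unfolding pivot_positions(1)[OF Cc piv] by auto
  qed
  then have G0C: "G0 * C = 1\<^sub>m nc"
    unfolding G0_def by (rule left_inverse_of_pivot_fun[OF Cc piv])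
  have G0: "G0 \<in> carrier_mat nc nr" by (simp add: G0_def)
  show ?thesis
  proof (rule bexI[of _ "G0 * P"])
    show "G0 * P * A = 1\<^sub>m nc" using assoc_mult_mat[OF G0 P A] G0C PC by simp
    show "G0 * P \<in> carrier_mat nc nr" using G0 P by simp
  qed
qed

lemma mult_vec_empty_cols:
  "A \<in> carrier_mat r 0 \<Longrightarrow> w \<in> carrier_vec 0 \<Longrightarrow> A *\<^sub>v w = (0\<^sub>v r :: 'k::field vec)"
  by (intro eq_vecI) (auto simp: scalar_prod_def)

lemma zero_mat_mult_vec: "v \<in> carrier_vec nc \<Longrightarrow> 0\<^sub>m nr nc *\<^sub>v v = (0\<^sub>v nr :: 'k::field vec)"
  by (intro eq_vecI) (auto simp: scalar_prod_def)

lemma single_col_mat_eq_zero: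
  assumes "A \<in> carrier_mat r 1" and "A *\<^sub>v unit_vec 1 0 = 0\<^sub>v r"
  shows "A = (0\<^sub>m r 1 :: 'k::field mat)"
proof (rule eq_matI)
  fix i j assume "i < dim_row (0\<^sub>m r 1 :: 'k mat)" "j < dim_col (0\<^sub>m r 1 :: 'k mat)"
  then have "i < r" "j = 0" by auto
  then have "A $$ (i, j) = (A *\<^sub>v unit_vec 1 0) $ i" using assms(1) by auto
  then show "A $$ (i, j) = 0\<^sub>m r 1 $$ (i, j)" using assms(2) \<open>i < r\<close> \<open>j = 0\<close> by simp
qed (use assms(1) in auto)

lemma mult_mat_vec_cancel:
  fixes A :: "'k::field mat"
  assumes A: "A \<in> carrier_mat nr nc"
    and inj: "\<forall>v \<in> carrier_vec nc. A *\<^sub>v v = 0\<^sub>v nr \<longrightarrow> v = 0\<^sub>v nc"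
    and x: "x \<in> carrier_vec nc" and y: "y \<in> carrier_vec nc" and eq: "A *\<^sub>v x = A *\<^sub>v y"
  shows "x = y"
proof (rule eq_vecI)
  have "A *\<^sub>v (x - y) = 0\<^sub>v nr" using A x y eq by (simp add: mult_minus_distrib_mat_vec)
  then have diff: "x - y = 0\<^sub>v nc" using inj x y by simp
  fix i assume "i < dim_vec y"
  then have "(x - y) $ i = 0" using diff y by simp
  then show "x $ i = y $ i" using \<open>i < dim_vec y\<close> x y by simp
qed (use x y in simp)

section \<open>Representations of the linear quiver\<close>

lemma rmap_carrier:
  "valid_rep n c X \<Longrightarrow> j + 1 < n \<Longrightarrow> rmap X j \<in> carrier_mat (rdim X (j + 1)) (rdim X j)"
  unfolding valid_rep_def by auto

lemma is_hom_carrier: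
  "is_hom n X Y f \<Longrightarrow> j < n \<Longrightarrow> f j \<in> carrier_mat (rdim Y j) (rdim X j)"
  unfolding is_hom_def by auto

lemma is_hom_commute:
  "is_hom n X Y f \<Longrightarrow> j + 1 < n \<Longrightarrow> rmap Y j * f j = f (j + 1) * rmap X j"
  unfolding is_hom_def by auto

lemma pathmat_carrier:
  assumes "valid_rep n c X" "i + l < n"
  shows "pathmat X i l \<in> carrier_mat (rdim X (i + l)) (rdim X i)"
  using assms(2)
proof (induction l)
  case (Suc l)
  then show ?case using rmap_carrier[OF assms(1), of "i + l"] by auto
qed simp

lemma pathmat_add:
  assumes X: "valid_rep n c X" and "i + l + m < n"
  shows "pathmat X i (l + m) = pathmat X (i + l) m * pathmat X i l"
  using assms(2)
proof (induction m)
  case 0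
  then show ?case using pathmat_carrier[OF X, of i l] by simp
next
  case (Suc m)
  then have "pathmat X i (l + Suc m) = rmap X (i + l + m) * (pathmat X (i + l) m * pathmat X i l)"
    by (simp add: add.assoc)
  also have "\<dots> = pathmat X (i + l) (Suc m) * pathmat X i l"
    using Suc.prems rmap_carrier[OF X, of "i + l + m"] pathmat_carrier[OF X, of "i + l" m]
      pathmat_carrier[OF X, of i l]
    by (simp add: add.assoc)
  finally show ?case .
qed

lemma pathmat_annihilates:
  assumes X: "valid_rep n c X" and "i + m < n" and "c i \<le> m"
  shows "pathmat X i m = 0\<^sub>m (rdim X (i + m)) (rdim X i)"
proof -
  have "pathmat X i m = pathmat X (i + c i) (m - c i) * pathmat X i (c i)"
    using pathmat_add[OF X, of i "c i" "m - c i"] assms(2,3) by simp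
  also have "\<dots> = 0\<^sub>m (rdim X (i + m)) (rdim X i)"
    using X assms(2,3) pathmat_carrier[OF X, of "i + c i" "m - c i"] unfolding valid_rep_def by simp
  finally show ?thesis .
qed

lemma is_hom_pathmat:
  assumes X: "valid_rep n c X" and Y: "valid_rep n c Y" and f: "is_hom n X Y f" and "i + l < n"
  shows "pathmat Y i l * f i = f (i + l) * pathmat X i l"
  using assms(4)
proof (induction l)
  case 0
  then show ?case using is_hom_carrier[OF f, of i] by simp
next
  case (Suc l)
  have rX: "rmap X (i + l) \<in> carrier_mat (rdim X (i + l + 1)) (rdim X (i + l))"
    and rY: "rmap Y (i + l) \<in> carrier_mat (rdim Y (i + l + 1)) (rdim Y (i + l))"
    using Suc.prems rmap_carrier[OF X] rmap_carrier[OF Y] by auto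
  have pX: "pathmat X i l \<in> carrier_mat (rdim X (i + l)) (rdim X i)"
    and pY: "pathmat Y i l \<in> carrier_mat (rdim Y (i + l)) (rdim Y i)"
    using Suc.prems pathmat_carrier[OF X] pathmat_carrier[OF Y] by auto
  have fi: "f i \<in> carrier_mat (rdim Y i) (rdim X i)"
    and fl: "f (i + l) \<in> carrier_mat (rdim Y (i + l)) (rdim X (i + l))"
    and fl1: "f (i + l + 1) \<in> carrier_mat (rdim Y (i + l + 1)) (rdim X (i + l + 1))"
    using Suc.prems is_hom_carrier[OF f] by auto
  have "pathmat Y i (Suc l) * f i = rmap Y (i + l) * (pathmat Y i l * f i)"
    using rY pY fi by simp
  also have "\<dots> = (rmap Y (i + l) * f (i + l)) * pathmat X i l"
    using Suc rY fl pX by simp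
  also have "\<dots> = f (i + Suc l) * pathmat X i (Suc l)"
    using Suc.prems is_hom_commute[OF f, of "i + l"] fl1 rX pX by simp
  finally show ?case .
qed

lemma is_hom_comp:
  assumes X: "valid_rep n c X" and Y: "valid_rep n c Y" and Z: "valid_rep n c Z"
    and f: "is_hom n X Y f" and g: "is_hom n Y Z g"
  shows "is_hom n X Z (\<lambda>j. g j * f j)"
  unfolding is_hom_def
proof (intro conjI allI impI)
  fix j assume "j < n"
  then show "g j * f j \<in> carrier_mat (rdim Z j) (rdim X j)"
    using is_hom_carrier[OF f] is_hom_carrier[OF g] by (meson mult_carrier_mat)
next
  fix j assume j: "j + 1 < n"
  have fj: "f j \<in> carrier_mat (rdim Y j) (rdim X j)"
    and fj1: "f (j + 1) \<in> carrier_mat (rdim Y (j + 1)) (rdim X (j + 1))"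
    and gj: "g j \<in> carrier_mat (rdim Z j) (rdim Y j)"
    and gj1: "g (j + 1) \<in> carrier_mat (rdim Z (j + 1)) (rdim Y (j + 1))"
    using j is_hom_carrier[OF f] is_hom_carrier[OF g] by auto
  have rX: "rmap X j \<in> carrier_mat (rdim X (j + 1)) (rdim X j)"
    and rY: "rmap Y j \<in> carrier_mat (rdim Y (j + 1)) (rdim Y j)"
    using j rmap_carrier[OF X] rmap_carrier[OF Y] by auto
  have rZ: "rmap Z j \<in> carrier_mat (rdim Z (j + 1)) (rdim Z j)"
    using j rmap_carrier[OF Z] by auto
  have "rmap Z j * (g j * f j) = (rmap Z j * g j) * f j"
    using rZ gj fj by simp
  also have "\<dots> = g (j + 1) * (rmap Y j * f j)"
    using is_hom_commute[OF g j] gj1 rY fj by simp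
  also have "\<dots> = g (j + 1) * f (j + 1) * rmap X j"
    using is_hom_commute[OF f j] gj1 fj1 rX by simp
  finally show "rmap Z j * (g j * f j) = g (j + 1) * f (j + 1) * rmap X j" .
qed

section \<open>Interval modules\<close>

definition interval_dim :: "nat \<Rightarrow> nat \<Rightarrow> nat \<Rightarrow> nat" where
  "interval_dim p q j = (if p \<le> j \<and> j \<le> q then 1 else 0)"

definition ones_mat :: "nat \<Rightarrow> nat \<Rightarrow> 'k::field mat" where
  "ones_mat r c = mat r c (\<lambda>_. 1)"

definition interval_map :: "nat \<Rightarrow> nat \<Rightarrow> nat \<Rightarrow> nat \<Rightarrow> nat \<Rightarrow> 'k::field mat" where
  "interval_map p q p' q' j = ones_mat (interval_dim p' q' j) (interval_dim p q j)"

lemma ones_mat_dims [simp]: "dim_row (ones_mat r c) = r" "dim_col (ones_mat r c) = c"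
  by (simp_all add: ones_mat_def)

lemma ones_mat_mult: "ones_mat r k * ones_mat k c = (mat r c (\<lambda>_. of_nat k) :: 'k::field mat)"
  by (rule eq_matI) (auto simp: ones_mat_def scalar_prod_def)

lemma ones_mat_one [simp]: "ones_mat (Suc 0) (Suc 0) = (1\<^sub>m (Suc 0) :: 'k::field mat)"
  by (rule eq_matI) (auto simp: ones_mat_def)

lemma ones_mat_empty: "r = 0 \<or> c = 0 \<Longrightarrow> ones_mat r c = (0\<^sub>m r c :: 'k::field mat)"
  by (rule eq_matI) (auto simp: ones_mat_def)

lemma interval_map_inside [simp]:
  "p \<le> j \<Longrightarrow> j \<le> q \<Longrightarrow> p' \<le> j \<Longrightarrow> j \<le> q' \<Longrightarrow> interval_map p q p' q' j = (1\<^sub>m 1 :: 'k::field mat)"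
  by (simp add: interval_map_def interval_dim_def)

lemma rdim_interval_rep [simp]: "rdim (interval_rep p q) j = interval_dim p q j"
  by (simp add: interval_rep_def interval_dim_def)

lemma rmap_interval_rep:
  "rmap (interval_rep p q) j = (ones_mat (interval_dim p q (j + 1)) (interval_dim p q j) :: 'k::field mat)"
proof (cases "p \<le> j \<and> j + 1 \<le> q")
  case True
  then show ?thesis by (intro eq_matI) (auto simp: interval_rep_def interval_dim_def ones_mat_def)
next
  case False
  then show ?thesis by (subst ones_mat_empty) (auto simp: interval_rep_def interval_dim_def)
qed

lemma pathmat_interval_rep:
  "pathmat (interval_rep p q) i l = (ones_mat (interval_dim p q (i + l)) (interval_dim p q i) :: 'k::field mat)"
proof (induction l)
  case 0
  show ?case by (rule eq_matI) (auto simp: ones_mat_def interval_dim_def split: if_splits)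
next
  case (Suc l)
  show ?case
    by (simp add: Suc rmap_interval_rep ones_mat_mult, rule eq_matI)
      (auto simp: ones_mat_def interval_dim_def split: if_splits)
qed

lemma valid_rep_interval_rep:
  assumes "q < n" and "\<And>i. p \<le> i \<Longrightarrow> i \<le> q \<Longrightarrow> q < i + c i"
  shows "valid_rep n c (interval_rep p q :: 'k::field rep)"
  unfolding valid_rep_def
proof (intro conjI allI impI)
  fix i assume "i < n" "i + c i < n"
  then show "pathmat (interval_rep p q :: 'k rep) i (c i) =
      0\<^sub>m (rdim (interval_rep p q :: 'k rep) (i + c i)) (rdim (interval_rep p q :: 'k rep) i)"
    using assms(2)[of i] by (simp add: pathmat_interval_rep, subst ones_mat_empty)
      (auto simp: interval_dim_def)
qed (use assms(1) in \<open>auto simp: rmap_interval_rep interval_dim_def\<close>)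

lemma is_hom_interval_map:
  assumes "p' \<le> p" "q' \<le> q"
  shows "is_hom n (interval_rep p q) (interval_rep p' q') (interval_map p q p' q' :: nat \<Rightarrow> 'k::field mat)"
  unfolding is_hom_def interval_map_def
  using assms by (auto simp: rmap_interval_rep ones_mat_mult intro!: eq_matI)
    (auto simp: interval_dim_def split: if_splits)

lemma is_mono_interval_map:
  assumes "p' \<le> p" "q \<le> q'"
  shows "is_mono n (interval_rep p q) (interval_map p q p' q' :: nat \<Rightarrow> 'k::field mat)"
  unfolding is_mono_def
proof (intro allI impI ballI)
  fix j and v :: "'k vec"
  assume v: "v \<in> carrier_vec (rdim (interval_rep p q :: 'k rep) j)"
    and zero: "interval_map p q p' q' j *\<^sub>v v = 0\<^sub>v (dim_row (interval_map p q p' q' j :: 'k mat))"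
  show "v = 0\<^sub>v (rdim (interval_rep p q :: 'k rep) j)"
  proof (cases "p \<le> j \<and> j \<le> q")
    case True
    then have "interval_map p q p' q' j = (1\<^sub>m 1 :: 'k mat)"
      using assms by (simp add: interval_map_def interval_dim_def)
    then show ?thesis using v zero True by (simp add: interval_dim_def)
  qed (use v in \<open>auto simp: interval_dim_def\<close>)
qed

lemma interval_map_mult_vec [simp]:
  assumes "v \<in> carrier_vec (interval_dim p q j)"
  shows "interval_map p q p' q' j *\<^sub>v v =
    (if p \<le> j \<and> j \<le> q \<and> p' \<le> j \<and> j \<le> q' then v else 0\<^sub>v (interval_dim p' q' j) :: 'k::field vec)"
  using assms by (intro eq_vecI)
    (auto simp: interval_map_def ones_mat_def interval_dim_def scalar_prod_def)

lemma is_hom_from_interval_carrier: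
  assumes "is_hom n (interval_rep p q) Y f" and "j < n"
  shows "p \<le> j \<Longrightarrow> j \<le> q \<Longrightarrow> f j \<in> carrier_mat (rdim Y j) 1"
    and "\<not> (p \<le> j \<and> j \<le> q) \<Longrightarrow> f j \<in> carrier_mat (rdim Y j) 0"
  using is_hom_carrier[OF assms] by (auto simp: interval_dim_def)

lemma hom_into_interval_rep_eq:
  assumes X: "valid_rep n c X" and g: "is_hom n X (interval_rep p q) g" and "q < n"
    and "p \<le> j" "j \<le> q"
  shows "g j = g q * pathmat X j (q - j)"
  using assms(4,5)
proof (induction "q - j" arbitrary: j)
  case 0
  then show ?case using is_hom_carrier[OF g \<open>q < n\<close>] by simp
next
  case (Suc k)
  then have j: "j + 1 < n" "j + 1 + k = q" "p \<le> j + 1" using \<open>q < n\<close> by auto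
  have gq: "g q \<in> carrier_mat (interval_dim p q q) (rdim X q)"
    using is_hom_carrier[OF g \<open>q < n\<close>] by simp
  have "g j = rmap (interval_rep p q) j * g j"
    using j Suc.prems is_hom_carrier[OF g, of j]
    by (simp add: rmap_interval_rep interval_dim_def)
  also have "\<dots> = g (j + 1) * rmap X j"
    using is_hom_commute[OF g j(1)] .
  also have "\<dots> = g q * (pathmat X (j + 1) k * pathmat X j 1)"
  proof -
    have "k = q - (j + 1)" using j by simp
    then have "g (j + 1) = g q * pathmat X (j + 1) k"
      using Suc.hyps(1)[of "j + 1"] j by simp
    moreover have "pathmat X (j + 1) k \<in> carrier_mat (rdim X q) (rdim X (j + 1))"
      using pathmat_carrier[OF X, of "j + 1" k] j \<open>q < n\<close> by simp
    ultimately show ?thesis using gq rmap_carrier[OF X j(1)] by simp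
  qed
  also have "\<dots> = g q * pathmat X j (q - j)"
    using pathmat_add[OF X, of j 1 k] j Suc.hyps(2) \<open>q < n\<close> by simp
  finally show ?case .
qed

text \<open>The hypothesis on p - 1 makes the square at the arrow from p - 1 to p commute: the path
  from p - 1 to q has length at least c (p - 1), so it is zero.\<close>
lemma is_hom_from_functional:
  assumes Y: "valid_rep n c Y" and "q < n" and "p \<le> q"
    and tight: "0 < p \<Longrightarrow> p - 1 + c (p - 1) \<le> q"
    and \<Lambda>: "\<Lambda> \<in> carrier_mat 1 (rdim Y q)"
  shows "is_hom n Y (interval_rep p q)
    (\<lambda>j. if p \<le> j \<and> j \<le> q then \<Lambda> * pathmat Y j (q - j) else 0\<^sub>m 0 (rdim Y j))"
    (is "is_hom n Y _ ?h")
  unfolding is_hom_def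
proof (intro conjI allI impI)
  fix j assume "j < n"
  then show "?h j \<in> carrier_mat (rdim (interval_rep p q) j) (rdim Y j)"
    using \<Lambda> pathmat_carrier[OF Y, of j "q - j"] \<open>q < n\<close> by (auto simp: interval_dim_def)
next
  fix j assume j: "j + 1 < n"
  show "rmap (interval_rep p q) j * ?h j = ?h (j + 1) * rmap Y j"
  proof (cases "p \<le> j + 1 \<and> j + 1 \<le> q")
    case False
    then show ?thesis using j rmap_carrier[OF Y j] \<open>q < n\<close> pathmat_carrier[OF Y, of j "q - j"] \<Lambda>
      by (intro eq_matI) (auto simp: rmap_interval_rep interval_dim_def)
  next
    case True
    have path: "pathmat Y j (q - j) = pathmat Y (j + 1) (q - (j + 1)) * rmap Y j"
      using pathmat_add[OF Y, of j 1 "q - (j + 1)"] True \<open>q < n\<close> rmap_carrier[OF Y j]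
      by (simp add: Suc_diff_Suc)
    have rhs: "?h (j + 1) * rmap Y j = \<Lambda> * pathmat Y j (q - j)"
      using True \<Lambda> pathmat_carrier[OF Y, of "j + 1" "q - (j + 1)"] rmap_carrier[OF Y j] \<open>q < n\<close>
      unfolding path by simp
    show ?thesis
    proof (cases "p \<le> j")
      case True
      then show ?thesis
        using rhs \<open>p \<le> j + 1 \<and> j + 1 \<le> q\<close> \<Lambda> pathmat_carrier[OF Y, of j "q - j"] \<open>q < n\<close>
        by (simp add: rmap_interval_rep interval_dim_def)
    next
      case False
      then have "j + 1 = p" using True by simp
      then have "c j \<le> q - j" using tight by auto
      then have "pathmat Y j (q - j) = 0\<^sub>m (rdim Y q) (rdim Y j)"
        using pathmat_annihilates[OF Y, of j "q - j"] \<open>j + 1 = p\<close> \<open>p \<le> q\<close> \<open>q < n\<close> by simp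
      then show ?thesis
        using rhs False \<open>j + 1 = p\<close> \<open>p \<le> q\<close> \<Lambda> \<open>q < n\<close>
        by (intro eq_matI) (auto simp: rmap_interval_rep interval_dim_def)
    qed
  qed
qed

text \<open>For p least with q < p + c p this is D(A e_q), and the proof is the isomorphism
  Hom(Y, D(A e_q)) = Hom_K(Y e_q, K) combined with a left inverse of the monomorphism at q.\<close>
lemma injective_interval_rep:
  assumes "q < n" and "p \<le> q"
    and cover: "\<And>i. p \<le> i \<Longrightarrow> i \<le> q \<Longrightarrow> q < i + c i"
    and tight: "0 < p \<Longrightarrow> p - 1 + c (p - 1) \<le> q"
  shows "injective_module n c (interval_rep p q :: 'k::field rep)"
  unfolding injective_module_def
proof (intro conjI allI impI)
  show "valid_rep n c (interval_rep p q :: 'k rep)"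
    using valid_rep_interval_rep[OF \<open>q < n\<close> cover] .
next
  fix X Y :: "'k rep" and f g
  assume X: "valid_rep n c X" and Y: "valid_rep n c Y" and f: "is_hom n X Y f"
    and mono: "is_mono n X f" and g: "is_hom n X (interval_rep p q) g"
  have fq: "f q \<in> carrier_mat (rdim Y q) (rdim X q)"
    using is_hom_carrier[OF f \<open>q < n\<close>] .
  have gq: "g q \<in> carrier_mat 1 (rdim X q)"
    using is_hom_carrier[OF g \<open>q < n\<close>] \<open>p \<le> q\<close> by (simp add: interval_dim_def)
  obtain G where G: "G \<in> carrier_mat (rdim X q) (rdim Y q)" "G * f q = 1\<^sub>m (rdim X q)"
    using left_inverse_of_injective_mat[OF fq] mono fq \<open>q < n\<close> unfolding is_mono_def by auto
  define \<Lambda> where "\<Lambda> = g q * G"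
  have \<Lambda>: "\<Lambda> \<in> carrier_mat 1 (rdim Y q)" using G gq by (simp add: \<Lambda>_def)
  have \<Lambda>f: "\<Lambda> * f q = g q" using G gq fq by (simp add: \<Lambda>_def)
  define h where "h j = (if p \<le> j \<and> j \<le> q then \<Lambda> * pathmat Y j (q - j) else 0\<^sub>m 0 (rdim Y j))" for j
  have h: "is_hom n Y (interval_rep p q) h"
    unfolding h_def using is_hom_from_functional[OF Y \<open>q < n\<close> \<open>p \<le> q\<close> tight \<Lambda>] .
  have "h j * f j = g j" if j: "j < n" for j
  proof (cases "p \<le> j \<and> j \<le> q")
    case True
    have "h j * f j = \<Lambda> * (pathmat Y j (q - j) * f j)"
      using True \<Lambda> pathmat_carrier[OF Y, of j "q - j"] is_hom_carrier[OF f j] \<open>q < n\<close>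
      by (simp add: h_def)
    also have "\<dots> = (\<Lambda> * f q) * pathmat X j (q - j)"
      using is_hom_pathmat[OF X Y f, of j "q - j"] True \<Lambda> fq pathmat_carrier[OF X, of j "q - j"] \<open>q < n\<close>
      by simp
    also have "\<dots> = g j"
      using \<Lambda>f hom_into_interval_rep_eq[OF X g \<open>q < n\<close>, of j] True by simp
    finally show ?thesis .
  next
    case False
    then show ?thesis using is_hom_carrier[OF f j] is_hom_carrier[OF g j]
      by (intro eq_matI) (auto simp: h_def interval_dim_def)
  qed
  then show "\<exists>h. is_hom n Y (interval_rep p q) h \<and> (\<forall>j<n. h j * f j = g j)"
    using h by blast
qed

section \<open>Injective coresolutions of interval modules\<close>

lemma injdim_le_zeroE:
  fixes M :: "'k::field rep"
  assumes "injdim_le n c M 0"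
  obtains I0 :: "'k rep" and \<epsilon> where "injective_module n c I0" "is_hom n M I0 \<epsilon>" "is_mono n M \<epsilon>"
    "\<And>j v. j < n \<Longrightarrow> v \<in> carrier_vec (rdim I0 j) \<Longrightarrow> \<exists>w \<in> carrier_vec (rdim M j). v = \<epsilon> j *\<^sub>v w"
  using assms unfolding injdim_le_def by auto

lemma injdim_le_one_iff:
  fixes M :: "'k::field rep"
  shows "injdim_le n c M 1 \<longleftrightarrow> (\<exists>(I0 :: 'k rep) I1 \<epsilon> \<delta>.
    injective_module n c I0 \<and> injective_module n c I1 \<and>
    is_hom n M I0 \<epsilon> \<and> is_mono n M \<epsilon> \<and> is_hom n I0 I1 \<delta> \<and>
    (\<forall>j < n. \<forall>v \<in> carrier_vec (rdim I0 j).
      \<delta> j *\<^sub>v v = 0\<^sub>v (rdim I1 j) \<longleftrightarrow> (\<exists>w \<in> carrier_vec (rdim M j). v = \<epsilon> j *\<^sub>v w)) \<and>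
    (\<forall>j < n. \<forall>v \<in> carrier_vec (rdim I1 j). \<exists>w \<in> carrier_vec (rdim I0 j). v = \<delta> j *\<^sub>v w))"
  (is "_ \<longleftrightarrow> ?resolution")
proof
  assume "injdim_le n c M 1"
  then obtain I :: "nat \<Rightarrow> 'k rep" and \<epsilon> \<delta> where
    "\<forall>k\<le>1. injective_module n c (I k)" "is_hom n M (I 0) \<epsilon>" "is_mono n M \<epsilon>"
    "\<forall>k<1. is_hom n (I k) (I (k + 1)) (\<delta> k)"
    and exact: "\<forall>k\<le>1. \<forall>j<n. \<forall>v\<in>carrier_vec (rdim (I k) j).
      ((k < 1 \<longrightarrow> \<delta> k j *\<^sub>v v = 0\<^sub>v (rdim (I (k + 1)) j)) \<longleftrightarrow>
       (if k = 0 then (\<exists>w \<in> carrier_vec (rdim M j). v = \<epsilon> j *\<^sub>v w)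
        else (\<exists>w \<in> carrier_vec (rdim (I (k - 1)) j). v = \<delta> (k - 1) j *\<^sub>v w)))"
    unfolding injdim_le_def by blast
  then show ?resolution
    using exact[rule_format, of 0] exact[rule_format, of 1]
    by (intro exI[of _ "I 0"] exI[of _ "I 1"] exI[of _ \<epsilon>] exI[of _ "\<delta> 0"]) auto
next
  assume ?resolution
  then obtain I0 I1 :: "'k rep" and \<epsilon> \<delta> where
    "injective_module n c I0" "injective_module n c I1"
    "is_hom n M I0 \<epsilon>" "is_mono n M \<epsilon>" "is_hom n I0 I1 \<delta>"
    "\<forall>j < n. \<forall>v \<in> carrier_vec (rdim I0 j).
      \<delta> j *\<^sub>v v = 0\<^sub>v (rdim I1 j) \<longleftrightarrow> (\<exists>w \<in> carrier_vec (rdim M j). v = \<epsilon> j *\<^sub>v w)"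
    "\<forall>j < n. \<forall>v \<in> carrier_vec (rdim I1 j). \<exists>w \<in> carrier_vec (rdim I0 j). v = \<delta> j *\<^sub>v w"
    by blast
  then show "injdim_le n c M 1"
    unfolding injdim_le_def
    by (intro exI[of _ "\<lambda>k. if k = 0 then I0 else I1"] exI[of _ \<epsilon>] exI[of _ "\<lambda>_. \<delta>"])
      (auto simp: le_Suc_eq)
qed

lemma extend_along_interval_map:
  fixes I :: "'k::field rep"
  assumes "q < n" "p' \<le> p"
    and cover: "\<And>i. p' \<le> i \<Longrightarrow> i \<le> q \<Longrightarrow> q < i + c i"
    and I: "injective_module n c I" and \<epsilon>: "is_hom n (interval_rep p q) I \<epsilon>"
  shows "\<exists>\<phi>. is_hom n (interval_rep p' q) I \<phi> \<and> (\<forall>j<n. \<phi> j * interval_map p q p' q j = \<epsilon> j)"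
proof -
  have "valid_rep n c (interval_rep p q :: 'k rep)" "valid_rep n c (interval_rep p' q :: 'k rep)"
    using assms(1,2) cover by (auto intro!: valid_rep_interval_rep)
  then show ?thesis
    using I \<epsilon> is_hom_interval_map[of p' p q q n] is_mono_interval_map[of p' p q q n] assms(2)
    unfolding injective_module_def by blast
qed

lemma extension_path_nonzero:
  fixes I :: "'k::field rep"
  assumes I: "valid_rep n c I" and "q < n" "p' \<le> p" "p \<le> m" "m \<le> q"
    and cover: "\<And>i. p' \<le> i \<Longrightarrow> i \<le> q \<Longrightarrow> q < i + c i"
    and mono: "is_mono n (interval_rep p q) \<epsilon>"
    and \<phi>: "is_hom n (interval_rep p' q) I \<phi>"
    and extends: "\<forall>j<n. \<phi> j * interval_map p q p' q j = \<epsilon> j"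
  shows "pathmat I p' (m - p') *\<^sub>v (\<phi> p' *\<^sub>v unit_vec 1 0) \<noteq> 0\<^sub>v (rdim I m)"
proof
  assume zero: "pathmat I p' (m - p') *\<^sub>v (\<phi> p' *\<^sub>v unit_vec 1 0) = 0\<^sub>v (rdim I m)"
  have in_range: "m < n" "p' < n" "p' \<le> m" using assms(2-5) by auto
  have \<phi>p': "\<phi> p' \<in> carrier_mat (rdim I p') 1" and \<phi>m: "\<phi> m \<in> carrier_mat (rdim I m) 1"
    using is_hom_from_interval_carrier(1)[OF \<phi>] in_range assms(5) by auto
  have "pathmat I p' (m - p') * \<phi> p' = \<phi> m * pathmat (interval_rep p' q) p' (m - p')"
    using is_hom_pathmat[OF valid_rep_interval_rep[OF \<open>q < n\<close> cover] I \<phi>, of p' "m - p'"] in_range by simp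
  also have "\<dots> = \<epsilon> m"
    using assms(3-5) extends[rule_format, OF in_range(1)] \<phi>m
    by (simp add: pathmat_interval_rep interval_dim_def)
  finally have "\<epsilon> m = pathmat I p' (m - p') * \<phi> p'" ..
  then have "\<epsilon> m *\<^sub>v unit_vec 1 0 = 0\<^sub>v (dim_row (\<epsilon> m))"
    using zero \<phi>p' pathmat_carrier[OF I, of p' "m - p'"] in_range by simp
  moreover have "unit_vec 1 0 \<in> carrier_vec (rdim (interval_rep p q :: 'k rep) m)"
    using assms(4,5) by (simp add: interval_dim_def)
  ultimately have "unit_vec 1 0 = (0\<^sub>v 1 :: 'k vec)"
    using mono[unfolded is_mono_def, rule_format, OF in_range(1)] assms(4,5) by (auto simp: interval_dim_def)
  then show False by simp
qed

lemma not_injdim_le_zero_interval: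
  assumes "b < n" "e < a" "a \<le> b"
    and cover: "\<And>i. e \<le> i \<Longrightarrow> i \<le> b \<Longrightarrow> b < i + c i"
  shows "\<not> injdim_le n c (interval_rep a b :: 'k::field rep) 0"
proof
  assume "injdim_le n c (interval_rep a b :: 'k rep) 0"
  then obtain I :: "'k rep" and \<epsilon> where I: "injective_module n c I"
    and \<epsilon>: "is_hom n (interval_rep a b) I \<epsilon>" "is_mono n (interval_rep a b) \<epsilon>"
    and onto: "\<And>j v. j < n \<Longrightarrow> v \<in> carrier_vec (rdim I j) \<Longrightarrow>
      \<exists>w \<in> carrier_vec (interval_dim a b j). v = \<epsilon> j *\<^sub>v w"
    by (auto elim: injdim_le_zeroE)
  obtain \<phi> where \<phi>: "is_hom n (interval_rep e b) I \<phi>"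
    and extends: "\<forall>j<n. \<phi> j * interval_map a b e b j = \<epsilon> j"
    using extend_along_interval_map[OF \<open>b < n\<close> less_imp_le[OF \<open>e < a\<close>] cover I \<epsilon>(1)] by blast
  have at_e: "e < n" "interval_dim a b e = 0" using assms(1-3) by (auto simp: interval_dim_def)
  \<comment> \<open>I is the image of \<epsilon>, which vanishes at e < a.\<close>
  have "\<phi> e *\<^sub>v unit_vec 1 0 = 0\<^sub>v (rdim I e)"
    using onto[OF at_e(1), of "\<phi> e *\<^sub>v unit_vec 1 0"] is_hom_carrier[OF \<phi> at_e(1)]
      is_hom_carrier[OF \<epsilon>(1) at_e(1)] at_e(2) \<open>e < a\<close> \<open>a \<le> b\<close>
    by (auto simp: interval_dim_def mult_vec_empty_cols)
  then show False
    using extension_path_nonzero[OF _ \<open>b < n\<close> _ \<open>a \<le> b\<close> order_refl cover \<epsilon>(2) \<phi> extends]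
      pathmat_carrier[of n c I e "b - e"] I assms(1-3)
    by (auto simp: injective_module_def)
qed

text \<open>[p, a - 1] is the quotient of [p, q] by its submodule [a, q], which is generated at a.\<close>
lemma is_hom_interval_truncate:
  assumes Y: "valid_rep n c Y" and \<chi>: "is_hom n (interval_rep p q) Y \<chi>"
    and "p < a" "a \<le> q" and vanish: "\<chi> a = 0\<^sub>m (rdim Y a) 1"
  shows "is_hom n (interval_rep p (a - 1)) Y (\<lambda>j. if j < a then \<chi> j else 0\<^sub>m (rdim Y j) 0)"
  unfolding is_hom_def
proof (intro conjI allI impI)
  fix j assume "j < n"
  then show "(if j < a then \<chi> j else 0\<^sub>m (rdim Y j) 0)
      \<in> carrier_mat (rdim Y j) (rdim (interval_rep p (a - 1)) j)"
    using is_hom_from_interval_carrier[OF \<chi> \<open>j < n\<close>] assms(3,4) by (auto simp: interval_dim_def)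
next
  fix j assume j: "j + 1 < n"
  show "rmap Y j * (if j < a then \<chi> j else 0\<^sub>m (rdim Y j) 0) =
      (if j + 1 < a then \<chi> (j + 1) else 0\<^sub>m (rdim Y (j + 1)) 0) * rmap (interval_rep p (a - 1)) j"
  proof (cases "j + 1 = a")
    case True
    then show ?thesis
      using is_hom_commute[OF \<chi> j] is_hom_carrier[OF \<chi>, of j] rmap_carrier[OF Y j] j vanish
        assms(3,4)
      by (auto simp: rmap_interval_rep interval_dim_def intro!: eq_matI)
  next
    case False
    then show ?thesis
      using is_hom_commute[OF \<chi> j] is_hom_carrier[OF \<chi>, of j] is_hom_carrier[OF \<chi>, of "j + 1"]
        rmap_carrier[OF Y j] j assms(3,4)
      by (cases "j < a") (auto simp: rmap_interval_rep interval_dim_def intro!: eq_matI)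
  qed
qed

lemma extend_cosyzygy_map:
  fixes I0 I1 :: "'k::field rep"
  assumes I0: "valid_rep n c I0" and I1: "injective_module n c I1"
    and \<delta>: "is_hom n I0 I1 \<delta>" and \<phi>: "is_hom n (interval_rep e b) I0 \<phi>"
    and "b < n" "L \<le> e" "e < a" "a \<le> b"
    and cover: "\<And>i. e \<le> i \<Longrightarrow> i \<le> b \<Longrightarrow> b < i + c i"
    and cover': "\<And>i. L \<le> i \<Longrightarrow> i \<le> a - 1 \<Longrightarrow> a - 1 < i + c i"
    and vanish: "\<delta> a * \<phi> a = 0\<^sub>m (rdim I1 a) 1"
  shows "\<exists>\<psi>. is_hom n (interval_rep L (a - 1)) I1 \<psi> \<and> \<psi> e = \<delta> e * \<phi> e"
proof -
  have I1_valid: "valid_rep n c I1" using I1 unfolding injective_module_def by blast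
  have "is_hom n (interval_rep e b) I1 (\<lambda>j. \<delta> j * \<phi> j)"
    using is_hom_comp[OF valid_rep_interval_rep[OF \<open>b < n\<close> cover] I0 I1_valid \<phi> \<delta>] .
  then have truncated:
    "is_hom n (interval_rep e (a - 1)) I1 (\<lambda>j. if j < a then \<delta> j * \<phi> j else 0\<^sub>m (rdim I1 j) 0)"
    using is_hom_interval_truncate[OF I1_valid _ \<open>e < a\<close> \<open>a \<le> b\<close>] vanish by simp
  have "a - 1 < n" using assms(5,8) by simp
  then obtain \<psi> where \<psi>: "is_hom n (interval_rep L (a - 1)) I1 \<psi>"
    and extends: "\<forall>j<n. \<psi> j * interval_map e (a - 1) L (a - 1) j =
      (if j < a then \<delta> j * \<phi> j else 0\<^sub>m (rdim I1 j) 0)"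
    using extend_along_interval_map[OF _ \<open>L \<le> e\<close> cover' I1 truncated] by blast
  have at_e: "e < n" "L \<le> e" "e \<le> a - 1" using assms(5-8) by auto
  then have "\<psi> e = \<delta> e * \<phi> e"
    using extends[rule_format, OF at_e(1)] is_hom_from_interval_carrier(1)[OF \<psi> at_e(1)] \<open>e < a\<close> by simp
  then show ?thesis using \<psi> by blast
qed

text \<open>The induced map from [e, a - 1] to I1 extends to [L, a - 1] by injectivity
  of I1; lift its value at L along \<delta>, which is onto at L and injective at e.\<close>
lemma envelope_top_lifts:
  fixes I0 I1 :: "'k::field rep"
  assumes I0: "valid_rep n c I0" and I1: "injective_module n c I1"
    and \<delta>: "is_hom n I0 I1 \<delta>" and \<phi>: "is_hom n (interval_rep e b) I0 \<phi>"
    and "b < n" "L \<le> e" "e < a" "a \<le> b"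
    and cover: "\<And>i. e \<le> i \<Longrightarrow> i \<le> b \<Longrightarrow> b < i + c i"
    and cover': "\<And>i. L \<le> i \<Longrightarrow> i \<le> a - 1 \<Longrightarrow> a - 1 < i + c i"
    and vanish: "\<delta> a * \<phi> a = 0\<^sub>m (rdim I1 a) 1"
    and inj_e: "\<forall>v \<in> carrier_vec (rdim I0 e). \<delta> e *\<^sub>v v = 0\<^sub>v (rdim I1 e) \<longrightarrow> v = 0\<^sub>v (rdim I0 e)"
    and surj_L: "\<And>v. v \<in> carrier_vec (rdim I1 L) \<Longrightarrow> \<exists>w \<in> carrier_vec (rdim I0 L). v = \<delta> L *\<^sub>v w"
  shows "\<exists>y \<in> carrier_vec (rdim I0 L). pathmat I0 L (e - L) *\<^sub>v y = \<phi> e *\<^sub>v unit_vec 1 0"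
proof -
  have I1_valid: "valid_rep n c I1" using I1 unfolding injective_module_def by blast
  obtain \<psi> where \<psi>: "is_hom n (interval_rep L (a - 1)) I1 \<psi>" and \<psi>e: "\<psi> e = \<delta> e * \<phi> e"
    using extend_cosyzygy_map[OF I0 I1 \<delta> \<phi> assms(5-8) cover cover' vanish] by blast
  have idx: "L < n" "e < n" "e \<le> a - 1" "L \<le> e" using assms(5-8) by auto
  have \<psi>L: "\<psi> L \<in> carrier_mat (rdim I1 L) 1"
    using is_hom_from_interval_carrier(1)[OF \<psi> idx(1)] idx by simp
  obtain y where y: "y \<in> carrier_vec (rdim I0 L)" and z: "\<psi> L *\<^sub>v unit_vec 1 0 = \<delta> L *\<^sub>v y"
    using surj_L[of "\<psi> L *\<^sub>v unit_vec 1 0"] \<psi>L by auto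
  define P0 where "P0 = pathmat I0 L (e - L)"
  define P1 where "P1 = pathmat I1 L (e - L)"
  have P0: "P0 \<in> carrier_mat (rdim I0 e) (rdim I0 L)"
    using pathmat_carrier[OF I0, of L "e - L"] idx unfolding P0_def by simp
  have P1: "P1 \<in> carrier_mat (rdim I1 e) (rdim I1 L)"
    using pathmat_carrier[OF I1_valid, of L "e - L"] idx unfolding P1_def by simp
  have \<delta>L: "\<delta> L \<in> carrier_mat (rdim I1 L) (rdim I0 L)" and \<delta>e: "\<delta> e \<in> carrier_mat (rdim I1 e) (rdim I0 e)"
    using is_hom_carrier[OF \<delta>] idx by auto
  have \<phi>e: "\<phi> e \<in> carrier_mat (rdim I0 e) 1"
    using is_hom_from_interval_carrier(1)[OF \<phi> idx(2)] assms(7,8) by simp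
  have hull_valid: "valid_rep n c (interval_rep L (a - 1) :: 'k rep)"
    using assms(5,8) cover' by (intro valid_rep_interval_rep) auto
  have "\<delta> e *\<^sub>v (P0 *\<^sub>v y) = (P1 * \<delta> L) *\<^sub>v y"
    using is_hom_pathmat[OF I0 I1_valid \<delta>, of L "e - L"] idx \<delta>e P0 y unfolding P0_def P1_def by simp
  also have "\<dots> = (P1 * \<psi> L) *\<^sub>v unit_vec 1 0"
    using z P1 \<delta>L \<psi>L y by simp
  also have "P1 * \<psi> L = \<psi> e"
    using is_hom_pathmat[OF hull_valid I1_valid \<psi>, of L "e - L"] idx
      is_hom_from_interval_carrier(1)[OF \<psi> idx(2)] unfolding P1_def
    by (simp add: pathmat_interval_rep interval_dim_def)
  finally have "\<delta> e *\<^sub>v (P0 *\<^sub>v y) = \<delta> e *\<^sub>v (\<phi> e *\<^sub>v unit_vec 1 0)"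
    using \<psi>e \<delta>e \<phi>e by simp
  then have "P0 *\<^sub>v y = \<phi> e *\<^sub>v unit_vec 1 0"
    using mult_mat_vec_cancel[OF \<delta>e inj_e] P0 y \<phi>e by simp
  then show ?thesis using y unfolding P0_def by blast
qed

lemma not_injdim_le_one_interval:
  assumes "b < n" "L < e" "e < a" "a \<le> b"
    and cover: "\<And>i. e \<le> i \<Longrightarrow> i \<le> b \<Longrightarrow> b < i + c i"
    and cover': "\<And>i. L \<le> i \<Longrightarrow> i \<le> a - 1 \<Longrightarrow> a - 1 < i + c i"
    and short: "L + c L \<le> b"
  shows "\<not> injdim_le n c (interval_rep a b :: 'k::field rep) 1"
proof
  assume "injdim_le n c (interval_rep a b :: 'k rep) 1"
  then obtain I0 I1 :: "'k rep" and \<epsilon> \<delta> where I0: "injective_module n c I0"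
    and I1: "injective_module n c I1"
    and \<epsilon>: "is_hom n (interval_rep a b) I0 \<epsilon>" "is_mono n (interval_rep a b) \<epsilon>"
    and \<delta>: "is_hom n I0 I1 \<delta>"
    and kernel: "\<forall>j < n. \<forall>v \<in> carrier_vec (rdim I0 j).
      \<delta> j *\<^sub>v v = 0\<^sub>v (rdim I1 j) \<longleftrightarrow> (\<exists>w \<in> carrier_vec (interval_dim a b j). v = \<epsilon> j *\<^sub>v w)"
    and onto: "\<forall>j < n. \<forall>v \<in> carrier_vec (rdim I1 j). \<exists>w \<in> carrier_vec (rdim I0 j). v = \<delta> j *\<^sub>v w"
    unfolding injdim_le_one_iff by auto
  have V0: "valid_rep n c I0" using I0 unfolding injective_module_def by blast
  obtain \<phi> where \<phi>: "is_hom n (interval_rep e b) I0 \<phi>"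
    and extends: "\<forall>j<n. \<phi> j * interval_map a b e b j = \<epsilon> j"
    using extend_along_interval_map[OF \<open>b < n\<close> less_imp_le[OF \<open>e < a\<close>] cover I0 \<epsilon>(1)] by blast
  have idx: "a < n" "e < n" "L < n" using assms(1-4) by auto
  have \<epsilon>a: "\<epsilon> a \<in> carrier_mat (rdim I0 a) 1"
    using is_hom_from_interval_carrier(1)[OF \<epsilon>(1) idx(1)] \<open>a \<le> b\<close> by simp
  have \<delta>a: "\<delta> a \<in> carrier_mat (rdim I1 a) (rdim I0 a)" using is_hom_carrier[OF \<delta> idx(1)] .
  have "\<phi> a = \<epsilon> a"
    using extends[rule_format, OF idx(1)] is_hom_from_interval_carrier(1)[OF \<phi> idx(1)] assms(3,4) by simp
  moreover have "\<delta> a *\<^sub>v (\<epsilon> a *\<^sub>v unit_vec 1 0) = 0\<^sub>v (rdim I1 a)"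
    using kernel[rule_format, OF idx(1), of "\<epsilon> a *\<^sub>v unit_vec 1 0"] \<epsilon>a \<open>a \<le> b\<close>
    by (auto simp: interval_dim_def)
  ultimately have vanish: "\<delta> a * \<phi> a = 0\<^sub>m (rdim I1 a) 1"
    using \<epsilon>a \<delta>a by (intro single_col_mat_eq_zero) auto
  \<comment> \<open>\<delta> is injective at e < a, where [a, b] vanishes.\<close>
  have inj_e: "\<forall>v \<in> carrier_vec (rdim I0 e). \<delta> e *\<^sub>v v = 0\<^sub>v (rdim I1 e) \<longrightarrow> v = 0\<^sub>v (rdim I0 e)"
    using kernel[rule_format, OF idx(2)] is_hom_from_interval_carrier(2)[OF \<epsilon>(1) idx(2)] \<open>e < a\<close>
    by (auto simp: mult_vec_empty_cols interval_dim_def)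
  obtain y where y: "y \<in> carrier_vec (rdim I0 L)"
    and lift: "pathmat I0 L (e - L) *\<^sub>v y = \<phi> e *\<^sub>v unit_vec 1 0"
    using envelope_top_lifts[OF V0 I1 \<delta> \<phi> \<open>b < n\<close> less_imp_le[OF \<open>L < e\<close>] assms(3,4) cover cover'
        vanish inj_e] onto idx(3) by blast
  define m where "m = L + c L"
  have "a - 1 < m" using cover'[of L] assms(2,3) unfolding m_def by simp
  then have m_range: "a \<le> m" "m \<le> b" "e \<le> m" using short assms(3) unfolding m_def by auto
  have "pathmat I0 e (m - e) *\<^sub>v (\<phi> e *\<^sub>v unit_vec 1 0) = pathmat I0 L (c L) *\<^sub>v y"
    using pathmat_add[OF V0, of L "e - L" "m - e"] pathmat_carrier[OF V0, of e "m - e"]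
      pathmat_carrier[OF V0, of L "e - L"] lift[symmetric] y m_range assms(1,2) unfolding m_def by simp
  also have "\<dots> = 0\<^sub>v (rdim I0 m)"
    using pathmat_annihilates[OF V0, of L "c L"] y m_range assms(1) unfolding m_def
    by (simp add: zero_mat_mult_vec)
  finally show False
    using extension_path_nonzero[OF V0 \<open>b < n\<close> less_imp_le[OF \<open>e < a\<close>] m_range(1,2) cover \<epsilon>(2) \<phi> extends]
    by simp
qed

lemma injdim_le_one_interval:
  assumes "b < n" "e < a" "a \<le> b"
    and cover: "\<And>i. e \<le> i \<Longrightarrow> i \<le> b \<Longrightarrow> b < i + c i"
    and tight: "0 < e \<Longrightarrow> e - 1 + c (e - 1) \<le> a - 1"
  shows "injdim_le n c (interval_rep a b :: 'k::field rep) 1"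
proof -
  have inj0: "injective_module n c (interval_rep e b :: 'k rep)"
    using assms by (intro injective_interval_rep) auto
  have inj1: "injective_module n c (interval_rep e (a - 1) :: 'k rep)"
    using assms by (intro injective_interval_rep) (auto simp: le_diff_conv2 dest: cover)
  have maps: "is_hom n (interval_rep a b) (interval_rep e b) (interval_map a b e b :: nat \<Rightarrow> 'k mat)"
    "is_mono n (interval_rep a b) (interval_map a b e b :: nat \<Rightarrow> 'k mat)"
    "is_hom n (interval_rep e b) (interval_rep e (a - 1)) (interval_map e b e (a - 1) :: nat \<Rightarrow> 'k mat)"
    using assms by (auto intro: is_hom_interval_map is_mono_interval_map)
  have kernel: "\<forall>j < n. \<forall>v \<in> carrier_vec (interval_dim e b j).
      interval_map e b e (a - 1) j *\<^sub>v v = (0\<^sub>v (interval_dim e (a - 1) j) :: 'k vec) \<longleftrightarrow>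
      (\<exists>w \<in> carrier_vec (interval_dim a b j). v = interval_map a b e b j *\<^sub>v w)"
    using assms(2,3) by (auto simp: interval_dim_def intro: zero_carrier_vec)
  have onto: "\<forall>j < n. \<forall>v \<in> carrier_vec (interval_dim e (a - 1) j).
      \<exists>w \<in> carrier_vec (interval_dim e b j). v = (interval_map e b e (a - 1) j *\<^sub>v w :: 'k vec)"
    using assms(2,3) by (auto simp: interval_dim_def intro: zero_carrier_vec)
  show ?thesis
    unfolding injdim_le_one_iff
    by (rule exI[of _ "interval_rep e b"], rule exI[of _ "interval_rep e (a - 1)"],
        rule exI[of _ "interval_map a b e b"], rule exI[of _ "interval_map e b e (a - 1)"])
      (use inj0 inj1 maps kernel onto in \<open>simp only: rdim_interval_rep\<close>)
qed

section \<open>The Kupisch series\<close>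

lemma kupisch_linear_reach_mono:
  assumes K: "kupisch_linear n c" and "i \<le> i'" "i' < n"
  shows "i + c i \<le> i' + c i'"
  using assms(2,3)
proof (induction i' rule: dec_induct)
  case (step k)
  then have "c k \<le> c (k + 1) + 1" using K unfolding kupisch_linear_def by simp
  then show ?case using step by simp
qed simp

lemma kupisch_linear_pos:
  assumes "kupisch_linear n c" and "j < n"
  shows "0 < c j"
proof (cases "j + 1 < n")
  case False
  then have "j = n - 1" using \<open>j < n\<close> by simp
  then show ?thesis using assms(1) unfolding kupisch_linear_def by simp
qed (use assms(1) in \<open>auto simp: kupisch_linear_def\<close>)

text \<open>D(A e_j) is the interval module [inj_start c j, j].\<close>
definition inj_start :: "(nat \<Rightarrow> nat) \<Rightarrow> nat \<Rightarrow> nat" where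
  "inj_start c j = (LEAST i. j < i + c i)"

lemma inj_start_least: "j < i + c i \<Longrightarrow> inj_start c j \<le> i"
  unfolding inj_start_def by (rule Least_le)

lemma inj_start_before: "i < inj_start c j \<Longrightarrow> i + c i \<le> j"
  unfolding inj_start_def using not_less_Least[of i "\<lambda>i. j < i + c i"] by simp

lemma inj_start_cover:
  assumes K: "kupisch_linear n c" and "j < n" "inj_start c j \<le> i" "i \<le> j"
  shows "j < i + c i"
proof -
  have "j < inj_start c j + c (inj_start c j)"
    unfolding inj_start_def by (rule LeastI[of _ j]) (use kupisch_linear_pos[OF K \<open>j < n\<close>] in simp)
  also have "\<dots> \<le> i + c i" using kupisch_linear_reach_mono[OF K] assms(2-4) by simp
  finally show ?thesis .
qed

lemma dual_dim_eq:
  assumes K: "kupisch_linear n c" and "j < n"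
  shows "dual_dim c j = j + 1 - inj_start c j"
proof -
  have "{i. i \<le> j \<and> j < i + c i} = {inj_start c j..j}"
    using inj_start_least[of j _ c] inj_start_cover[OF K \<open>j < n\<close>] by auto
  then show ?thesis unfolding dual_dim_def by simp
qed

lemma injdim_le_one_interval_iff:
  assumes K: "kupisch_linear n c" and "b < n" "inj_start c b < a" "a \<le> b"
  shows "injdim_le n c (interval_rep a b :: 'k::field rep) 1 \<longleftrightarrow> inj_start c (a - 1) = inj_start c b"
proof -
  define e where "e = inj_start c b"
  define L where "L = inj_start c (a - 1)"
  have cover: "\<And>i. e \<le> i \<Longrightarrow> i \<le> b \<Longrightarrow> b < i + c i"
    using inj_start_cover[OF K \<open>b < n\<close>] unfolding e_def by blast
  have cover': "\<And>i. L \<le> i \<Longrightarrow> i \<le> a - 1 \<Longrightarrow> a - 1 < i + c i"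
    using inj_start_cover[OF K, of "a - 1"] assms(2,4) unfolding L_def by simp
  have "e < a" using assms(3) unfolding e_def .
  have "L \<le> e"
    using inj_start_least[of "a - 1" e c] cover[of e] \<open>e < a\<close> \<open>a \<le> b\<close> unfolding L_def by simp
  show ?thesis
  proof
    assume injdim: "injdim_le n c (interval_rep a b :: 'k rep) 1"
    show "inj_start c (a - 1) = inj_start c b"
    proof (rule ccontr)
      assume "inj_start c (a - 1) \<noteq> inj_start c b"
      then have "L < e" using \<open>L \<le> e\<close> unfolding L_def e_def by simp
      then have "L + c L \<le> b" using inj_start_before[of L c b] unfolding e_def by simp
      then show False
        using not_injdim_le_one_interval[OF \<open>b < n\<close> \<open>L < e\<close> \<open>e < a\<close> \<open>a \<le> b\<close> cover cover'] injdim
        by blast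
    qed
  next
    assume "inj_start c (a - 1) = inj_start c b"
    then have "L = e" unfolding L_def e_def .
    then have "e - 1 + c (e - 1) \<le> a - 1" if "0 < e"
      using inj_start_before[of "e - 1" c "a - 1"] that unfolding L_def by simp
    then show "injdim_le n c (interval_rep a b :: 'k rep) 1"
      using injdim_le_one_interval[OF \<open>b < n\<close> \<open>e < a\<close> \<open>a \<le> b\<close> cover] by blast
  qed
qed

lemma eJpow_bounds:
  assumes K: "kupisch_linear n c" and "s + 2 \<le> n" "1 \<le> t" "t \<le> c s - 1"
  shows "s + c s - 1 < n" "inj_start c (s + c s - 1) < s + t" "s + t \<le> s + c s - 1" "2 \<le> c s"
proof -
  show "2 \<le> c s" using K assms(2) unfolding kupisch_linear_def by simp
  have "s + c s \<le> (n - 1) + c (n - 1)" using kupisch_linear_reach_mono[OF K, of s "n - 1"] assms(2) by simp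
  then show "s + c s - 1 < n" using K \<open>2 \<le> c s\<close> unfolding kupisch_linear_def by simp
  have "inj_start c (s + c s - 1) \<le> s" using \<open>2 \<le> c s\<close> by (intro inj_start_least) simp
  then show "inj_start c (s + c s - 1) < s + t" using assms(3) by simp
  show "s + t \<le> s + c s - 1" using assms(4) \<open>2 \<le> c s\<close> by simp
qed

lemma dual_dim_condition_iff:
  assumes K: "kupisch_linear n c" and "s + 2 \<le> n" "1 \<le> t" "t \<le> c s - 1"
  shows "int (dual_dim c (s + c s - 1)) - int (c s) + int t = int (dual_dim c (s + t - 1)) \<longleftrightarrow>
    inj_start c (s + t - 1) = inj_start c (s + c s - 1)"
proof -
  note bounds = eJpow_bounds[OF assms]
  define e where "e = inj_start c (s + c s - 1)"
  define L where "L = inj_start c (s + t - 1)"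
  have "0 < c (s + t - 1)"
    using kupisch_linear_pos[OF K, of "s + t - 1"] bounds(1,3) by simp
  then have "L \<le> s + t" unfolding L_def using inj_start_least[of "s + t - 1" "s + t - 1" c] by simp
  moreover have "e \<le> s + c s" using bounds(2,3) unfolding e_def by simp
  moreover have "dual_dim c (s + c s - 1) = s + c s - e"
    using dual_dim_eq[OF K bounds(1)] bounds(4) unfolding e_def by simp
  moreover have "dual_dim c (s + t - 1) = s + t - L"
    using dual_dim_eq[OF K, of "s + t - 1"] bounds assms(3) unfolding L_def by simp
  ultimately show ?thesis unfolding e_def[symmetric] L_def[symmetric] by (auto simp: of_nat_diff)
qed

theorem mainTheorem7:
  fixes n :: nat and c :: "nat \<Rightarrow> nat" and s t :: nat
  assumes "kupisch_linear n c"
    and "s + 2 \<le> n"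
    and "1 \<le> t" and "t \<le> c s - 1"
  shows "(injdim_le n c (eJpow c s t :: 'k::field rep) 1 \<longleftrightarrow>
            int (dual_dim c (s + c s - 1)) - int (c s) + int t = int (dual_dim c (s + t - 1)))
       \<and> (injdim_le n c (eJpow c s t :: 'k::field rep) 1 \<longrightarrow>
            \<not> injdim_le n c (eJpow c s t :: 'k rep) 0)
       \<and> (injdim_le n c (eJpow c s 1 :: 'k rep) 1 \<longleftrightarrow>
            int (dual_dim c (s + c s - 1)) - int (c s) + 1 = int (dual_dim c s))"
proof -
  have injdim_one_iff: "injdim_le n c (eJpow c s t' :: 'k rep) 1 \<longleftrightarrow>
      int (dual_dim c (s + c s - 1)) - int (c s) + int t' = int (dual_dim c (s + t' - 1))"
    if "1 \<le> t'" "t' \<le> c s - 1" for t'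
    using injdim_le_one_interval_iff[OF assms(1) eJpow_bounds(1-3)[OF assms(1,2) that]]
      dual_dim_condition_iff[OF assms(1,2) that] eJpow_bounds(2,3)[OF assms(1,2) that]
    unfolding eJpow_def by simp
  have "\<not> injdim_le n c (eJpow c s t :: 'k rep) 0"
    using not_injdim_le_zero_interval[OF eJpow_bounds(1-3)[OF assms] inj_start_cover[OF assms(1)]]
      eJpow_bounds(1)[OF assms]
    unfolding eJpow_def by blast
  moreover have "1 \<le> c s - 1" using eJpow_bounds(4)[OF assms] by simp
  ultimately show ?thesis
    using injdim_one_iff[OF assms(3,4)] injdim_one_iff[OF order_refl] by simp
qed

end
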